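(* Let $\mathcal{M} = (N,V,S,\{S_{c}\}_{c \in Ag},L)$ be a simplicial belief model and let $a,b \in Ag$ be agents such that $S_{a} = S_{b}$. Then for every formula $\phi \in \mathcal{L}_{KB}(Ag)$ and every facet $X \in \mathcal{F}(S)$, we have $\mathcal{M}, X \models B_{a}(B_{b}\phi \rightarrow \phi)$.
   Context: $Ag$ is a finite set of agents and $\mathfrak{P}$ a countable set of propositional atoms. A simplicial complex is a set $S$ of sets closed under subsets; its elements are faces, and $\mathcal{F}(S)$ denotes the set of facets (faces maximal under inclusion). A simplicial frame is $(N,V,S)$ with $N$ a set of nodes, $V: N \to Ag$ a coloring function, and $S \subseteq 2^{N}$ a simplicial complex satisfying the uniquely colored facets (UCF) condition: every facet $X \in \mathcal{F}(S)$ contains exactly one node $n$ with $V(n)=c$ for each $c \in Ag$. For a facet $Z$ and agent $c$, $\pi_{c}(Z) = V^{-1}(c) \cap Z$ (the unique $c$-colored node of $Z$). A simplicial belief model is $(N,V,S,\{S_{c}\}_{c \in Ag},L)$ where $(N,V,S)$ is a UCF simplicial frame, $L: \mathfrak{P} \to 2^{\mathcal{F}(S)}$ is a valuation, and each $S_{c} \subseteq S$ is a nonempty simplicial complex which also satisfies UCF (so $\mathcal{F}(S_{c}) \subseteq \mathcal{F}(S)$). The language $\mathcal{L}_{KB}(Ag)$ is given by $\phi ::= P \mid \bot \mid \phi \rightarrow \psi \mid K_{c}\phi \mid B_{c}\phi$ ($P \in \mathfrak{P}$, $c \in Ag$), with other connectives defined as usual. Semantics at facets $X \in \mathcal{F}(S)$: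 $X \models P$ iff $X \in L(P)$; $X \not\models \bot$; $X \models \phi\rightarrow\psi$ iff $X \models \phi$ implies $X \models \psi$; $X \models K_{c}\phi$ iff for all $Y \in \mathcal{F}(S)$ with $\pi_{c}(Y) = \pi_{c}(X)$, $Y \models \phi$; $X \models B_{c}\phi$ iff for all $Y \in \mathcal{F}(S_{c})$ with $\pi_{c}(Y) = \pi_{c}(X)$, $Y \models \phi$. *)

theory Defs
  imports "HOL-Library.Countable"
begin

text \<open>Agents form the finite type 'ag (so Ag = UNIV); atoms form a countable type 'p.\<close>

definition simplicial_complex :: "'n set set \<Rightarrow> bool" where
  "simplicial_complex S \<longleftrightarrow> (\<forall>X\<in>S. \<forall>Y. Y \<subseteq> X \<longrightarrow> Y \<in> S)"

definition facets :: "'n set set \<Rightarrow> 'n set set" where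
  "facets S = {X \<in> S. \<forall>Y\<in>S. X \<subseteq> Y \<longrightarrow> Y = X}"

definition ucf :: "('n \<Rightarrow> 'ag::finite) \<Rightarrow> 'n set set \<Rightarrow> bool" where
  "ucf V S \<longleftrightarrow> (\<forall>X\<in>facets S. \<forall>c. \<exists>!n. n \<in> X \<and> V n = c)"

definition proj :: "('n \<Rightarrow> 'ag) \<Rightarrow> 'ag \<Rightarrow> 'n set \<Rightarrow> 'n set" where
  "proj V c Z = V -` {c} \<inter> Z"

definition simplicial_frame :: "'n set \<Rightarrow> ('n \<Rightarrow> 'ag::finite) \<Rightarrow> 'n set set \<Rightarrow> bool" where
  "simplicial_frame N V S \<longleftrightarrow> S \<subseteq> Pow N \<and> simplicial_complex S \<and> ucf V S"

definition simplicial_belief_model ::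
  "'n set \<Rightarrow> ('n \<Rightarrow> 'ag::finite) \<Rightarrow> 'n set set \<Rightarrow> ('ag \<Rightarrow> 'n set set) \<Rightarrow> ('p::countable \<Rightarrow> 'n set set) \<Rightarrow> bool" where
  "simplicial_belief_model N V S Sc L \<longleftrightarrow>
     simplicial_frame N V S \<and>
     (\<forall>P. L P \<subseteq> facets S) \<and>
     (\<forall>c. Sc c \<subseteq> S \<and> Sc c \<noteq> {} \<and> simplicial_complex (Sc c) \<and> ucf V (Sc c)
          \<and> facets (Sc c) \<subseteq> facets S)"

datatype ('p, 'ag) fm =
    Atom 'p
  | Bot
  | Imp "('p, 'ag) fm" "('p, 'ag) fm"
  | K 'ag "('p, 'ag) fm"
  | B 'ag "('p, 'ag) fm"

fun sat :: "('n \<Rightarrow> 'ag) \<Rightarrow> 'n set set \<Rightarrow> ('ag \<Rightarrow> 'n set set) \<Rightarrow> ('p \<Rightarrow> 'n set set)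
            \<Rightarrow> 'n set \<Rightarrow> ('p, 'ag) fm \<Rightarrow> bool" where
  "sat V S Sc L X (Atom P) = (X \<in> L P)"
| "sat V S Sc L X Bot = False"
| "sat V S Sc L X (Imp \<phi> \<psi>) = (sat V S Sc L X \<phi> \<longrightarrow> sat V S Sc L X \<psi>)"
| "sat V S Sc L X (K c \<phi>) =
     (\<forall>Y\<in>facets S. proj V c Y = proj V c X \<longrightarrow> sat V S Sc L Y \<phi>)"
| "sat V S Sc L X (B c \<phi>) =
     (\<forall>Y\<in>facets (Sc c). proj V c Y = proj V c X \<longrightarrow> sat V S Sc L Y \<phi>)"

end

theory Submission
  imports Defs
begin

lemma sat_B_truth_on_own_facets:
  assumes "Y \<in> facets (Sc c)"
  shows "sat V S Sc L Y (Imp (B c \<phi>) \<phi>)"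
  using assms by simp

theorem proposition1:
  fixes N :: "'n set" and V :: "'n \<Rightarrow> 'ag::finite" and S :: "'n set set"
    and Sc :: "'ag \<Rightarrow> 'n set set" and L :: "'p::countable \<Rightarrow> 'n set set"
    and a b :: 'ag and \<phi> :: "('p, 'ag) fm" and X :: "'n set"
  assumes "simplicial_belief_model N V S Sc L"
    and "Sc a = Sc b"
    and "X \<in> facets S"
  shows "sat V S Sc L X (B a (Imp (B b \<phi>) \<phi>))"
proof -
  have "sat V S Sc L Y (Imp (B b \<phi>) \<phi>)" if "Y \<in> facets (Sc a)" for Y
  proof -
    from that have "Y \<in> facets (Sc b)"
      using assms(2) by simp
    then show ?thesis
      by (rule sat_B_truth_on_own_facets)
  qed
  then show ?thesis
    by (simp del: sat.simps(3))
qed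

end
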